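(* Fix $R>0$ and an integer $k\ge2$. There exist a sequence $(\mathbb{X}_n,d_n,\nu_n)_{n\in\mathbb{N}}$ of complete separable metric spaces with locally finite Borel measures satisfying Assumption (A), pure $k$-body repulsive symmetric potentials $\phi^{(n)}$ on $\mathbb{X}_n$ of range at most $R$, bounded measurable sets $\Lambda_n\subseteq\mathbb{X}_n$, and reals $\lambda_n>0$, such that (1) $B_R^{(n)}:=\sup_{x\in\mathbb{X}_n}\nu_n(\{y\in\mathbb{X}_n: d_n(x,y)\le R\})$ satisfies $B_R^{(n)}\to\infty$ as $n\to\infty$; (2) $\lambda_n=O\!\left(\frac{\log B_R^{(n)}}{B_R^{(n)}}\right)$; and (3) $Z_{\Lambda_n,\phi^{(n)}}(-\lambda_n)=0$ for every $n$.
   Context: Assumption (A) on $(\mathbb{X},d,\nu)$: for every $x\in\mathbb{X}$, the push-forward of $\nu$ under $y\mapsto d(x,y)$ is absolutely continuous with respect to Lebesgue measure on $\mathbb{R}$. A potential $\phi=(\phi_m)_{m\in\mathbb{N}}$ is a family of measurable $\phi_m:\mathbb{X}^m\to\mathbb{R}\cup\{\infty\}$, written $\phi(\mathbf{x})=\phi_m(\mathbf{x})$; symmetric: invariant under coordinate permutations; repulsive: $\phi_m\ge0$; range at most $R$: $\phi(\mathbf{x})=0$ whenever $\max_{i,j}d(x_i,x_j)>R$; pure $k$-body: $\phi_m=0$ for all $m\ne k$. For $\mathbf{x}\in\mathbb{X}^m$, $S\subseteq[m]$, $\mathbf{x}_S=(x_i)_{i\in S}$; $H(\mathbf{x})=\sum_{\emptyset\ne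 S\subseteq[m]}\phi(\mathbf{x}_S)$; $Z_{\Lambda,\phi}(\lambda)=\sum_{m\ge0}\frac{\lambda^m}{m!}\int_{\Lambda^m}e^{-H(\mathbf{x})}\nu^m(d\mathbf{x})$ with $e^{-\infty}=0$. *)

theory Defs
  imports "HOL-Analysis.Analysis" "HOL-Library.Landau_Symbols"
begin

definition cs_mm_space :: "'a set \<Rightarrow> ('a \<Rightarrow> 'a \<Rightarrow> real) \<Rightarrow> 'a measure \<Rightarrow> bool" where
  "cs_mm_space X d nu \<longleftrightarrow>
     Metric_space X d \<and> Metric_space.mcomplete X d \<and>
     separable_space (Metric_space.mtopology X d) \<and>
     space nu = X \<and>
     sets nu = sigma_sets X {U. openin (Metric_space.mtopology X d) U} \<and>
     (\<forall>x\<in>X. \<exists>U. openin (Metric_space.mtopology X d) U \<and> x \<in> U \<and> emeasure nu U < \<infinity>)"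

definition assumption_A :: "'a set \<Rightarrow> ('a \<Rightarrow> 'a \<Rightarrow> real) \<Rightarrow> 'a measure \<Rightarrow> bool" where
  "assumption_A X d nu \<longleftrightarrow>
     (\<forall>x\<in>X. absolutely_continuous lborel (distr nu lborel (\<lambda>y. d x y)))"

text \<open>A potential is a family phi m : X^m \<rightarrow> R \<union> {\<infinity>}; X^m is represented as the
  extensional functions {..<m} \<rightarrow> X (the space of the product measure).\<close>
type_synonym 'a potential = "nat \<Rightarrow> (nat \<Rightarrow> 'a) \<Rightarrow> ereal"

definition potential_measurable :: "'a measure \<Rightarrow> 'a potential \<Rightarrow> bool" where
  "potential_measurable nu phi \<longleftrightarrow>
     (\<forall>m. phi m \<in> borel_measurable (PiM {..<m} (\<lambda>_. nu)))
     \<and> (\<forall>m x. phi m x \<noteq> -\<infinity>)"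

definition potential_symmetric :: "'a set \<Rightarrow> 'a potential \<Rightarrow> bool" where
  "potential_symmetric X phi \<longleftrightarrow>
     (\<forall>m p x. p permutes {..<m} \<longrightarrow> x \<in> PiE {..<m} (\<lambda>_. X) \<longrightarrow>
        phi m (\<lambda>i\<in>{..<m}. x (p i)) = phi m x)"

definition potential_repulsive :: "'a set \<Rightarrow> 'a potential \<Rightarrow> bool" where
  "potential_repulsive X phi \<longleftrightarrow> (\<forall>m. \<forall>x\<in>PiE {..<m} (\<lambda>_. X). phi m x \<ge> 0)"

definition potential_range :: "'a set \<Rightarrow> ('a \<Rightarrow> 'a \<Rightarrow> real) \<Rightarrow> real \<Rightarrow> 'a potential \<Rightarrow> bool" where
  "potential_range X d R phi \<longleftrightarrow>
     (\<forall>m. \<forall>x\<in>PiE {..<m} (\<lambda>_. X).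
        (\<exists>i<m. \<exists>j<m. d (x i) (x j) > R) \<longrightarrow> phi m x = 0)"

definition pure_k_body :: "'a set \<Rightarrow> nat \<Rightarrow> 'a potential \<Rightarrow> bool" where
  "pure_k_body X k phi \<longleftrightarrow> (\<forall>m. m \<noteq> k \<longrightarrow> (\<forall>x\<in>PiE {..<m} (\<lambda>_. X). phi m x = 0))"

definition subtuple :: "nat set \<Rightarrow> (nat \<Rightarrow> 'a) \<Rightarrow> (nat \<Rightarrow> 'a)" where
  "subtuple S x = (\<lambda>j\<in>{..<card S}. x (enumerate S j))"

definition hamiltonian :: "'a potential \<Rightarrow> nat \<Rightarrow> (nat \<Rightarrow> 'a) \<Rightarrow> ereal" where
  "hamiltonian phi m x = (\<Sum>S\<in>{S. S \<subseteq> {..<m} \<and> S \<noteq> {}}. phi (card S) (subtuple S x))"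

definition boltzmann :: "ereal \<Rightarrow> real" where
  "boltzmann h = (if h = \<infinity> then 0 else if h = -\<infinity> then 0 else exp (- real_of_ereal h))"

definition Zint :: "'a measure \<Rightarrow> 'a potential \<Rightarrow> 'a set \<Rightarrow> nat \<Rightarrow> ennreal" where
  "Zint nu phi L m =
     (\<integral>\<^sup>+ x. indicator (PiE {..<m} (\<lambda>_. L)) x * ennreal (boltzmann (hamiltonian phi m x))
        \<partial>PiM {..<m} (\<lambda>_. nu))"

definition partition_function_eq :: "'a measure \<Rightarrow> 'a potential \<Rightarrow> 'a set \<Rightarrow> real \<Rightarrow> real \<Rightarrow> bool" where
  "partition_function_eq nu phi L lam s \<longleftrightarrow>
     (\<forall>m. Zint nu phi L m < \<infinity>) \<and>
     (\<lambda>m. lam ^ m / fact m * enn2real (Zint nu phi L m)) sums s"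

definition ball_volume_sup :: "'a set \<Rightarrow> ('a \<Rightarrow> 'a \<Rightarrow> real) \<Rightarrow> 'a measure \<Rightarrow> real \<Rightarrow> ennreal" where
  "ball_volume_sup X d nu R = (SUP x\<in>X. emeasure nu {y\<in>X. d x y \<le> R})"

end

theory Submission
  imports Defs "HOL-Real_Asymp.Real_Asymp"
begin

text \<open>Take the real line with \<open>\<nu>\<^sub>n = (n + 1) \<cdot> Lebesgue\<close>, so \<open>B\<^sub>R = 2(n + 1)R\<close>, and
  \<open>\<Lambda> = [0, R)\<close> cut into \<open>p\<close> cells of length \<open>R/p\<close>, where \<open>p = k - 1\<close> for even \<open>k\<close> and
  \<open>p = k\<close> for odd \<open>k\<close>. The hard-core \<open>k\<close>-body potential forbids \<open>k\<close> particles of \<open>\<Lambda>\<close> from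
  occupying fewer than \<open>k\<close> distinct cells. By pigeonhole, configurations of more than \<open>p\<close>
  (and at least \<open>k\<close>) particles have infinite energy, so \<open>Z(-\<lambda>)\<close> is the polynomial
  \<open>\<Sum>\<^sub>m\<^sub><\<^sub>k (-t)\<^sup>m/m! + w (-t)\<^sup>k/k!\<close> in \<open>t = \<lambda>(n + 1)R\<close>, with \<open>w = 0\<close> for even \<open>k\<close> and
  \<open>w \<ge> k\<^sup>-\<^sup>k\<close> for odd \<open>k\<close>. Either way it is a polynomial of odd degree with negative leading
  coefficient, equal to \<open>1\<close> at \<open>0\<close>, and it has a root \<open>t\<close> below a bound depending only on \<open>k\<close>.
  Hence \<open>\<lambda>\<^sub>n = t/((n + 1)R) = O(1/B\<^sub>R)\<close>.\<close>

section \<open>Scaled Lebesgue measure on the real line\<close>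

lemma separable_space_euclidean: "separable_space (euclidean :: 'a::second_countable_topology topology)"
proof -
  obtain D :: "'a set" where "countable D" "\<And>X. open X \<Longrightarrow> X \<noteq> {} \<Longrightarrow> \<exists>d\<in>D. d \<in> X"
    by (rule countable_dense_setE) blast
  then show ?thesis
    unfolding separable_space_def dense_intersects_open
    by (intro exI[of _ D]) auto
qed

lemma cs_mm_space_polish:
  fixes nu :: "'a::polish_space measure"
  assumes "sets nu = sets borel"
    and "\<And>x. \<exists>U. open U \<and> x \<in> U \<and> emeasure nu U < \<infinity>"
  shows "cs_mm_space UNIV dist nu"
  using assms sets_eq_imp_space_eq[OF assms(1)]
  unfolding cs_mm_space_def
  by (auto simp: Met_TC.Metric_space_axioms complete_UNIV separable_space_euclidean
      borel_def)

lemma absolutely_continuous_scale_measure: "absolutely_continuous M (scale_measure r M)"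
  unfolding absolutely_continuous_def
proof
  fix A assume "A \<in> null_sets M"
  then show "A \<in> null_sets (scale_measure r M)"
    by (simp add: null_sets_def)
qed

lemma sigma_finite_scale_measure:
  assumes "sigma_finite_measure M"
  shows "sigma_finite_measure (scale_measure (ennreal c) M)"
proof
  obtain A where "countable A" "A \<subseteq> sets M" "\<Union>A = space M" "\<forall>a\<in>A. emeasure M a \<noteq> \<infinity>"
    using sigma_finite_measure.sigma_finite_countable[OF assms] by blast
  then show "\<exists>A. countable A \<and> A \<subseteq> sets (scale_measure (ennreal c) M) \<and>
      \<Union>A = space (scale_measure (ennreal c) M) \<and> (\<forall>a\<in>A. emeasure (scale_measure (ennreal c) M) a \<noteq> \<infinity>)"
    by (intro exI[of _ A]) (auto simp: space_scale_measure ennreal_mult_eq_top_iff)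
qed

lemma assumption_A_real_line:
  fixes nu :: "real measure"
  assumes sets_nu: "sets nu = sets borel" and ac: "absolutely_continuous lborel nu"
  shows "assumption_A UNIV dist nu"
  unfolding assumption_A_def absolutely_continuous_def
proof (intro ballI subsetI)
  fix x :: real and N :: "real set" assume N: "N \<in> null_sets lborel"
  have [measurable]: "N \<in> sets borel" using N by auto
  have N_ae: "AE z in lborel. z \<notin> N" using N by (rule AE_not_in)
  have "AE y in lborel. x + -1 * y \<notin> N" "AE y in lborel. - x + 1 * y \<notin> N"
    by (rule AE_borel_affine[where P="\<lambda>z. z \<notin> N", OF _ _ N_ae]; simp)+
  then have "AE y in lborel. dist x y \<notin> N"
    by eventually_elim (auto simp: dist_real_def abs_if)
  then have "dist x -` N \<in> null_sets lborel"
    by (subst AE_iff_null_sets) (auto simp: vimage_def)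
  then have "dist x -` N \<in> null_sets nu" using ac by (auto simp: absolutely_continuous_def)
  moreover have "dist x \<in> measurable nu lborel" using sets_nu by (simp cong: measurable_cong_sets)
  ultimately show "N \<in> null_sets (distr nu lborel (dist x))"
    by (auto simp: null_sets_distr_iff)
qed

lemma cs_mm_space_scaled_lborel:
  "cs_mm_space UNIV dist (scale_measure (ennreal c) (lborel :: 'a::euclidean_space measure))"
proof (rule cs_mm_space_polish)
  fix x :: 'a
  show "\<exists>U. open U \<and> x \<in> U \<and> emeasure (scale_measure (ennreal c) lborel) U < \<infinity>"
    using emeasure_lborel_ball_finite[of x 1]
    by (intro exI[of _ "ball x 1"]) (auto simp: ennreal_mult_less_top top.not_eq_extremum)
qed simp

lemma assumption_A_scaled_lborel:
  "assumption_A UNIV dist (scale_measure (ennreal c) (lborel :: real measure))"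
  by (rule assumption_A_real_line) (simp_all add: absolutely_continuous_scale_measure)

lemma ball_volume_sup_scaled_lborel:
  assumes "0 \<le> c" "0 \<le> R"
  shows "ball_volume_sup UNIV dist (scale_measure (ennreal c) (lborel :: real measure)) R =
    ennreal (2 * c * R)"
proof -
  have ball: "emeasure (scale_measure (ennreal c) lborel) {y \<in> UNIV. dist x y \<le> R} =
    ennreal (2 * c * R)" for x :: real
  proof -
    have "{y \<in> UNIV. dist x y \<le> R} = {x - R .. x + R}"
      by (auto simp: dist_real_def)
    then show ?thesis
      using assms by (simp add: ennreal_mult[symmetric])
  qed
  then show ?thesis
    unfolding ball_volume_sup_def ball by simp
qed

lemma emeasure_PiM_scale_measure_PiE:
  assumes "sigma_finite_measure M" "finite I" "\<And>i. i \<in> I \<Longrightarrow> A i \<in> sets M"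
  shows "emeasure (PiM I (\<lambda>_. scale_measure (ennreal c) M)) (PiE I A) =
    (\<Prod>i\<in>I. ennreal c * emeasure M (A i))"
proof -
  interpret product_sigma_finite "\<lambda>_. scale_measure (ennreal c) M"
    using sigma_finite_scale_measure[OF assms(1)] by (simp add: product_sigma_finite_def)
  show ?thesis
    using assms(2,3) by (simp add: emeasure_PiM)
qed

lemma emeasure_PiM_scaled_lborel_interval:
  assumes "0 \<le> c" "0 \<le> R"
  shows "emeasure (PiM {..<m} (\<lambda>_. scale_measure (ennreal c) lborel)) (PiE {..<m} (\<lambda>_. {0..<R})) =
    ennreal ((c * R) ^ m)"
  using assms
  by (simp add: emeasure_PiM_scale_measure_PiE sigma_finite_lborel ennreal_mult[symmetric] ennreal_power)

lemma boltzmann_0 [simp]: "boltzmann 0 = 1"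
  by (simp add: boltzmann_def)

lemma boltzmann_infinity [simp]: "boltzmann \<infinity> = 0"
  by (simp add: boltzmann_def)

lemma boltzmann_le_1: "0 \<le> h \<Longrightarrow> boltzmann h \<le> 1"
  unfolding boltzmann_def using real_of_ereal_pos[of h] by auto

lemma subtuple_PiE:
  assumes "S \<subseteq> {..<m}" "x \<in> PiE {..<m} (\<lambda>_. X)"
  shows "subtuple S x \<in> PiE {..<card S} (\<lambda>_. X)"
proof -
  have "finite S" using assms(1) finite_subset by blast
  then show ?thesis
    using assms finite_enumerate_in_set[of S] by (auto simp: subtuple_def)
qed

lemma hamiltonian_nonneg:
  assumes "potential_repulsive X phi" "x \<in> PiE {..<m} (\<lambda>_. X)"
  shows "0 \<le> hamiltonian phi m x"
  unfolding hamiltonian_def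
proof (intro sum_nonneg)
  fix S assume "S \<in> {S. S \<subseteq> {..<m} \<and> S \<noteq> {}}"
  then have "S \<subseteq> {..<m}"
    by simp
  then have "subtuple S x \<in> PiE {..<card S} (\<lambda>_. X)"
    using assms(2) by (rule subtuple_PiE)
  then show "0 \<le> phi (card S) (subtuple S x)"
    using assms(1) by (simp add: potential_repulsive_def)
qed

lemma hamiltonian_pure_k_body_less:
  assumes "pure_k_body X k phi" "m < k" "x \<in> PiE {..<m} (\<lambda>_. X)"
  shows "hamiltonian phi m x = 0"
  unfolding hamiltonian_def
proof (intro sum.neutral ballI)
  fix S assume "S \<in> {S. S \<subseteq> {..<m} \<and> S \<noteq> {}}"
  then have "S \<subseteq> {..<m}" by simp
  then have "card S < k"
    using assms(2) card_mono[of "{..<m}" S] by simp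
  moreover have "subtuple S x \<in> PiE {..<card S} (\<lambda>_. X)"
    using \<open>S \<subseteq> {..<m}\<close> assms(3) by (rule subtuple_PiE)
  ultimately show "phi (card S) (subtuple S x) = 0"
    using assms(1) by (simp add: pure_k_body_def)
qed

lemma hamiltonian_eq_infinity:
  assumes "\<And>n y. phi n y \<noteq> -\<infinity>" "S \<subseteq> {..<m}" "S \<noteq> {}"
    and "phi (card S) (subtuple S x) = \<infinity>"
  shows "hamiltonian phi m x = \<infinity>"
  unfolding hamiltonian_def using assms by (subst sum_Pinfty) auto

lemma Zint_le_emeasure:
  assumes "L \<in> sets nu" "\<And>x. x \<in> PiE {..<m} (\<lambda>_. L) \<Longrightarrow> 0 \<le> hamiltonian phi m x"
  shows "Zint nu phi L m \<le> emeasure (PiM {..<m} (\<lambda>_. nu)) (PiE {..<m} (\<lambda>_. L))"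
proof -
  have "Zint nu phi L m \<le> (\<integral>\<^sup>+ x. indicator (PiE {..<m} (\<lambda>_. L)) x \<partial>PiM {..<m} (\<lambda>_. nu))"
    unfolding Zint_def
    using assms(2) boltzmann_le_1
    by (intro nn_integral_mono) (auto simp: indicator_def)
  also have "\<dots> = emeasure (PiM {..<m} (\<lambda>_. nu)) (PiE {..<m} (\<lambda>_. L))"
    using assms(1) by (intro nn_integral_indicator sets_PiM_I_finite) auto
  finally show ?thesis .
qed

lemma emeasure_le_Zint:
  assumes "A \<in> sets (PiM {..<m} (\<lambda>_. nu))" "A \<subseteq> PiE {..<m} (\<lambda>_. L)"
    and "\<And>x. x \<in> A \<Longrightarrow> hamiltonian phi m x = 0"
  shows "emeasure (PiM {..<m} (\<lambda>_. nu)) A \<le> Zint nu phi L m"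
proof -
  have "emeasure (PiM {..<m} (\<lambda>_. nu)) A = (\<integral>\<^sup>+ x. indicator A x \<partial>PiM {..<m} (\<lambda>_. nu))"
    using assms(1) by simp
  also have "\<dots> \<le> Zint nu phi L m"
    unfolding Zint_def
    using assms(2,3) by (intro nn_integral_mono) (auto simp: indicator_def)
  finally show ?thesis .
qed

lemma Zint_eq_0:
  assumes "\<And>x. x \<in> PiE {..<m} (\<lambda>_. L) \<Longrightarrow> hamiltonian phi m x = \<infinity>"
  shows "Zint nu phi L m = 0"
proof -
  have "Zint nu phi L m = (\<integral>\<^sup>+ x. 0 \<partial>PiM {..<m} (\<lambda>_. nu))"
    unfolding Zint_def using assms by (intro nn_integral_cong) (simp add: indicator_def)
  then show ?thesis by simp
qed

lemma partition_function_eq_polynomial: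
  assumes "\<And>m. Zint nu phi L m < \<infinity>" "\<And>m. n < m \<Longrightarrow> Zint nu phi L m = 0"
  shows "partition_function_eq nu phi L lam
    (\<Sum>m\<le>n. lam ^ m / fact m * enn2real (Zint nu phi L m))"
  unfolding partition_function_eq_def using assms
  by (intro conjI allI sums_finite) (auto simp: not_le)

section \<open>Roots of a perturbed Taylor polynomial of \<open>exp (-t)\<close>\<close>

definition scaled_exp_taylor :: "nat \<Rightarrow> real \<Rightarrow> real \<Rightarrow> real" where
  "scaled_exp_taylor j w t = (\<Sum>m<j. (-t) ^ m / fact m) + w * (-t) ^ j / fact j"

lemma alternating_exp_sum_le:
  assumes "1 \<le> T"
  shows "(\<Sum>m<n. (-T) ^ m / fact m) \<le> real n * T ^ (n - 1)"
proof -
  have "(-T) ^ m / fact m \<le> T ^ (n - 1)" if "m < n" for m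
  proof -
    have "(-T) ^ m \<le> T ^ m"
      using assms abs_ge_self[of "(-T) ^ m"] by (simp add: power_abs)
    then have "(-T) ^ m / fact m \<le> T ^ m / fact m"
      by (simp add: divide_right_mono)
    also have "\<dots> \<le> T ^ m"
      using assms by (simp add: divide_le_eq mult_le_cancel_left1)
    also have "\<dots> \<le> T ^ (n - 1)"
      using assms that by (intro power_increasing) auto
    finally show ?thesis .
  qed
  then have "(\<Sum>m<n. (-T) ^ m / fact m) \<le> (\<Sum>m<n. T ^ (n - 1))"
    by (intro sum_mono) simp
  then show ?thesis
    by simp
qed

text \<open>At \<open>T = j \<cdot> j! / w\<^sub>0 + 1\<close> the leading term \<open>-w T\<^sup>j / j!\<close> outweighs the bound
  \<open>j T\<^sup>j\<^sup>-\<^sup>1\<close> on the remaining terms, so the intermediate value theorem applies on \<open>[0, T]\<close>.\<close>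

lemma scaled_exp_taylor_root:
  assumes "odd j" "0 < w0" "w0 \<le> w"
  shows "\<exists>t>0. t \<le> real j * fact j / w0 + 1 \<and> scaled_exp_taylor j w t = 0"
proof -
  define T where "T = real j * fact j / w0 + 1"
  have "1 \<le> T"
    using assms(2) by (simp add: T_def)
  have "0 < j"
    using odd_pos[OF assms(1)] .
  have "scaled_exp_taylor j w T \<le> real j * T ^ (j - 1) - w * T ^ j / fact j"
    using alternating_exp_sum_le[OF \<open>1 \<le> T\<close>, of j] assms(1) by (simp add: scaled_exp_taylor_def)
  also have "\<dots> \<le> real j * T ^ (j - 1) - w0 * T ^ j / fact j"
    using assms(3) \<open>1 \<le> T\<close> by (simp add: divide_right_mono mult_right_mono)
  also have "\<dots> = T ^ (j - 1) * (real j - w0 * T / fact j)"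
    using \<open>0 < j\<close> by (simp add: algebra_simps power_eq_if)
  also have "real j - w0 * T / fact j = - (w0 / fact j)"
    using assms(2) by (simp add: T_def field_simps)
  also have "T ^ (j - 1) * - (w0 / fact j) < 0"
    using assms(2) \<open>1 \<le> T\<close> by (simp add: mult_pos_neg)
  finally have "scaled_exp_taylor j w T < 0" .
  moreover have "scaled_exp_taylor j w 0 = 1"
    using \<open>0 < j\<close> by (simp add: scaled_exp_taylor_def zero_power lessThan_atLeast0 sum.atLeast_Suc_lessThan)
  moreover have "continuous_on {0..T} (scaled_exp_taylor j w)"
    unfolding scaled_exp_taylor_def by (intro continuous_intros) auto
  ultimately obtain t where "0 \<le> t" "t \<le> T" "scaled_exp_taylor j w t = 0"
    using IVT2'[of "scaled_exp_taylor j w" T 0 0] \<open>1 \<le> T\<close> by auto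
  moreover have "t \<noteq> 0"
    using \<open>scaled_exp_taylor j w 0 = 1\<close> \<open>scaled_exp_taylor j w t = 0\<close> by auto
  ultimately show ?thesis
    unfolding T_def by (intro exI[of _ t]) auto
qed

lemma not_inj_on_subset_card:
  assumes "\<not> inj_on f A" "finite A" "2 \<le> k" "k \<le> card A"
  obtains S where "S \<subseteq> A" "card S = k" "\<not> inj_on f S"
proof -
  obtain i j where ij: "i \<in> A" "j \<in> A" "i \<noteq> j" "f i = f j"
    using assms(1) by (auto simp: inj_on_def)
  have "k - 2 \<le> card (A - {i, j})"
    using ij assms(2-4) by (simp add: card_Diff_subset)
  then obtain T where T: "T \<subseteq> A - {i, j}" "card T = k - 2"
    by (rule obtain_subset_with_card_n)
  have "finite T"
    using T(1) assms(2) finite_subset by blast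
  then have "card (insert i (insert j T)) = k"
    using T ij assms(3) by (auto simp: card_insert_if)
  moreover have "insert i (insert j T) \<subseteq> A" "\<not> inj_on f (insert i (insert j T))"
    using T ij by (auto simp: inj_on_def)
  ultimately show ?thesis
    using that by blast
qed

definition cell :: "real \<Rightarrow> nat \<Rightarrow> real \<Rightarrow> nat" where
  "cell R p y = nat \<lfloor>y * real p / R\<rfloor>"

definition cell_interval :: "real \<Rightarrow> nat \<Rightarrow> nat \<Rightarrow> real set" where
  "cell_interval R p i = {R * real i / real p ..< R * real (Suc i) / real p}"

lemma cell_less:
  assumes "0 < R" "0 < p" "y \<in> {0..<R}"
  shows "cell R p y < p"
proof -
  have "y * real p / R < real p"
    using assms by (simp add: divide_less_eq)
  then show ?thesis
    using assms by (simp add: cell_def nat_less_iff floor_less_iff)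
qed

lemma cell_eq:
  assumes "0 < R" "0 < p" "y \<in> cell_interval R p i"
  shows "cell R p y = i"
proof -
  have "real i \<le> y * real p / R" "y * real p / R < real i + 1"
    using assms by (auto simp: cell_interval_def field_simps)
  then have "\<lfloor>y * real p / R\<rfloor> = int i"
    by (intro floor_unique) auto
  then show ?thesis
    by (simp add: cell_def)
qed

lemma cell_interval_subset:
  assumes "0 < R" "i < p"
  shows "cell_interval R p i \<subseteq> {0..<R}"
proof -
  have "R * real (Suc i) / real p \<le> R"
    using assms by (simp add: divide_le_eq)
  then show ?thesis
    using assms by (auto simp: cell_interval_def)
qed

lemma emeasure_cell_interval:
  assumes "0 < R" "0 < p"
  shows "emeasure lborel (cell_interval R p i) = ennreal (R / real p)"
proof -
  have "R * real (Suc i) / real p - R * real i / real p = R / real p"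
    by (simp add: diff_divide_distrib[symmetric] algebra_simps)
  moreover have "R * real i / real p \<le> R * real (Suc i) / real p"
    using assms by (simp add: divide_right_mono)
  ultimately show ?thesis
    by (simp add: cell_interval_def)
qed

definition crowded :: "real \<Rightarrow> nat \<Rightarrow> (nat \<Rightarrow> real) \<Rightarrow> nat set \<Rightarrow> bool" where
  "crowded R p y I \<longleftrightarrow> y ` I \<subseteq> {0..<R} \<and> \<not> inj_on (cell R p \<circ> y) I"

lemma crowded_bij_betw:
  assumes "bij_betw f J I" "\<And>j. j \<in> J \<Longrightarrow> y j = x (f j)"
  shows "crowded R p y J \<longleftrightarrow> crowded R p x I"
proof -
  have "y ` J = x ` I"
    using assms by (auto simp: bij_betw_def image_comp[symmetric] cong: image_cong)
  moreover have "inj_on (cell R p \<circ> y) J \<longleftrightarrow> inj_on (cell R p \<circ> x) I"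
  proof -
    have "inj_on (cell R p \<circ> y) J \<longleftrightarrow> inj_on (cell R p \<circ> x \<circ> f) J"
      using assms(2) by (intro inj_on_cong) simp
    also have "\<dots> \<longleftrightarrow> inj_on (cell R p \<circ> x) I"
      using assms(1) comp_inj_on_iff[of f J "cell R p \<circ> x"] by (auto simp: bij_betw_def)
    finally show ?thesis .
  qed
  ultimately show ?thesis
    by (simp add: crowded_def)
qed

lemma crowded_subtuple:
  assumes "finite S"
  shows "crowded R p (subtuple S x) {..<card S} \<longleftrightarrow> crowded R p x S"
  using finite_bij_enumerate[OF assms] by (intro crowded_bij_betw) (auto simp: subtuple_def)

lemma crowded_pigeonhole:
  assumes "0 < R" "0 < p" "finite I" "p < card I" "y ` I \<subseteq> {0..<R}"
  shows "crowded R p y I"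
proof -
  have "(cell R p \<circ> y) ` I \<subseteq> {..<p}"
    using assms(5) cell_less[OF assms(1,2)] by (auto simp: image_subset_iff)
  then have "card ((cell R p \<circ> y) ` I) \<le> p"
    by (metis card_lessThan card_mono finite_lessThan)
  then have "\<not> inj_on (cell R p \<circ> y) I"
    using assms(4) card_image by fastforce
  then show ?thesis
    using assms(5) by (simp add: crowded_def)
qed

section \<open>The crowding potential\<close>

definition num_cells :: "nat \<Rightarrow> nat" where
  "num_cells k = (if even k then k - 1 else k)"

definition crowding_potential :: "real \<Rightarrow> nat \<Rightarrow> real potential" where
  "crowding_potential R k m y =
     (if m = k \<and> crowded R (num_cells k) y {..<k} then \<infinity> else 0)"

lemma num_cells_pos: "2 \<le> k \<Longrightarrow> 0 < num_cells k"
  by (simp add: num_cells_def)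

lemma crowding_potential_nonneg [simp]: "0 \<le> crowding_potential R k m y"
  by (simp add: crowding_potential_def)

lemma crowding_potential_not_MInfty [simp]: "crowding_potential R k m y \<noteq> -\<infinity>"
  by (simp add: crowding_potential_def)

lemma potential_repulsive_crowding: "potential_repulsive UNIV (crowding_potential R k)"
  by (simp add: potential_repulsive_def)

lemma pure_k_body_crowding: "pure_k_body UNIV k (crowding_potential R k)"
  by (simp add: pure_k_body_def crowding_potential_def)

lemma potential_symmetric_crowding: "potential_symmetric UNIV (crowding_potential R k)"
  unfolding potential_symmetric_def
proof (intro allI impI)
  fix m :: nat and p :: "nat \<Rightarrow> nat" and x :: "nat \<Rightarrow> real"
  assume "p permutes {..<m}"
  then have "crowded R (num_cells k) (\<lambda>i\<in>{..<m}. x (p i)) {..<m} \<longleftrightarrow>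
      crowded R (num_cells k) x {..<m}"
    by (intro crowded_bij_betw permutes_imp_bij) auto
  then show "crowding_potential R k m (\<lambda>i\<in>{..<m}. x (p i)) = crowding_potential R k m x"
    by (cases "m = k") (simp_all add: crowding_potential_def)
qed

lemma potential_range_crowding: "potential_range UNIV dist R (crowding_potential R k)"
  unfolding potential_range_def
proof (intro allI ballI impI)
  fix m and x :: "nat \<Rightarrow> real"
  assume "\<exists>i<m. \<exists>j<m. R < dist (x i) (x j)"
  then obtain i j where "i < m" "j < m" "R < dist (x i) (x j)"
    by blast
  have "\<not> x ` {..<m} \<subseteq> {0..<R}"
  proof
    assume "x ` {..<m} \<subseteq> {0..<R}"
    then have "x i \<in> {0..<R}" "x j \<in> {0..<R}"
      using \<open>i < m\<close> \<open>j < m\<close> by auto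
    then show False
      using \<open>R < dist (x i) (x j)\<close> by (auto simp: dist_real_def abs_if split: if_split_asm)
  qed
  then show "crowding_potential R k m x = 0"
    by (auto simp: crowding_potential_def crowded_def)
qed

lemma potential_measurable_crowding:
  assumes "sets M = sets borel"
  shows "potential_measurable M (crowding_potential R k)"
  unfolding potential_measurable_def
proof (intro conjI allI)
  fix m :: nat
  let ?M = "PiM {..<m} (\<lambda>_. M)"
  have in_box: "Measurable.pred ?M (\<lambda>y. \<forall>i\<in>{..<m}. y i \<in> {0..<R})"
  proof (intro pred_intros_finite(3) finite_lessThan)
    fix i assume "i \<in> {..<m}"
    then show "Measurable.pred ?M (\<lambda>y. y i \<in> {0..<R})"
      using assms by measurable
  qed
  have injective: "Measurable.pred ?M (\<lambda>y. \<forall>i\<in>{..<m}. \<forall>j\<in>{..<m}.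
      nat \<lfloor>y i * real (num_cells k) / R\<rfloor> = nat \<lfloor>y j * real (num_cells k) / R\<rfloor> \<longrightarrow> i = j)"
  proof (intro pred_intros_finite(3) finite_lessThan)
    fix i j assume "i \<in> {..<m}" "j \<in> {..<m}"
    then show "Measurable.pred ?M (\<lambda>y.
        nat \<lfloor>y i * real (num_cells k) / R\<rfloor> = nat \<lfloor>y j * real (num_cells k) / R\<rfloor> \<longrightarrow> i = j)"
      using assms by measurable
  qed
  have "crowding_potential R k m = (\<lambda>y. if m = k \<and> (\<forall>i\<in>{..<m}. y i \<in> {0..<R}) \<and>
      \<not> (\<forall>i\<in>{..<m}. \<forall>j\<in>{..<m}.
        nat \<lfloor>y i * real (num_cells k) / R\<rfloor> = nat \<lfloor>y j * real (num_cells k) / R\<rfloor> \<longrightarrow> i = j)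
      then \<infinity> else 0)"
    by (auto simp: fun_eq_iff crowding_potential_def crowded_def cell_def inj_on_def)
  also have "\<dots> \<in> borel_measurable ?M"
    using in_box injective by measurable
  finally show "crowding_potential R k m \<in> borel_measurable ?M" .
qed simp

lemma hamiltonian_crowding_eq_infinity:
  assumes "0 < R" "2 \<le> k" "k \<le> m" "num_cells k < m" "x \<in> PiE {..<m} (\<lambda>_. {0..<R})"
  shows "hamiltonian (crowding_potential R k) m x = \<infinity>"
proof -
  have "crowded R (num_cells k) x {..<m}"
    using assms num_cells_pos by (intro crowded_pigeonhole) auto
  then obtain S where S: "S \<subseteq> {..<m}" "card S = k" "\<not> inj_on (cell R (num_cells k) \<circ> x) S"
    using assms(2,3) not_inj_on_subset_card[of _ "{..<m}" k] by (auto simp: crowded_def)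
  have "finite S"
    using S(1) finite_subset by blast
  moreover have "crowded R (num_cells k) x S"
    using S assms(5) by (auto simp: crowded_def)
  ultimately have "crowding_potential R k (card S) (subtuple S x) = \<infinity>"
    using crowded_subtuple[of S R "num_cells k" x] S(2) by (simp add: crowding_potential_def)
  moreover have "S \<noteq> {}"
    using S(2) assms(2) by auto
  ultimately show ?thesis
    using S(1) by (intro hamiltonian_eq_infinity) auto
qed

lemma hamiltonian_crowding_cell_intervals:
  assumes "0 < R" "odd k" "x \<in> PiE {..<k} (cell_interval R k)"
  shows "hamiltonian (crowding_potential R k) k x = 0"
  unfolding hamiltonian_def
proof (intro sum.neutral ballI)
  fix S assume "S \<in> {S. S \<subseteq> {..<k} \<and> S \<noteq> {}}"
  then have S: "S \<subseteq> {..<k}" "finite S"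
    using finite_subset by auto
  have "k \<noteq> 0"
    using odd_pos[OF assms(2)] by simp
  have "cell R k (x i) = i" if "i \<in> S" for i
  proof -
    have "x i \<in> cell_interval R k i"
      using PiE_mem[OF assms(3)] S(1) that by blast
    then show ?thesis
      using assms(1) \<open>k \<noteq> 0\<close> by (intro cell_eq) auto
  qed
  moreover have "num_cells k = k"
    using assms(2) by (simp add: num_cells_def)
  ultimately have "inj_on (cell R (num_cells k) \<circ> x) S"
    by (intro inj_onI) (metis comp_apply)
  then have "\<not> crowded R (num_cells k) (subtuple S x) {..<card S}"
    using crowded_subtuple[OF S(2)] by (simp add: crowded_def)
  then show "crowding_potential R k (card S) (subtuple S x) = 0"
    by (cases "card S = k") (simp_all add: crowding_potential_def)
qed

lemma Zint_crowding_le: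
  assumes "0 \<le> c" "0 < R"
  shows "Zint (scale_measure (ennreal c) lborel) (crowding_potential R k) {0..<R} m \<le>
    ennreal ((c * R) ^ m)"
proof -
  have "\<And>x. x \<in> PiE {..<m} (\<lambda>_. {0..<R}) \<Longrightarrow> 0 \<le> hamiltonian (crowding_potential R k) m x"
    using potential_repulsive_crowding by (rule hamiltonian_nonneg) auto
  then have "Zint (scale_measure (ennreal c) lborel) (crowding_potential R k) {0..<R} m \<le>
      emeasure (PiM {..<m} (\<lambda>_. scale_measure (ennreal c) lborel)) (PiE {..<m} (\<lambda>_. {0..<R}))"
    by (intro Zint_le_emeasure) simp_all
  also have "\<dots> = ennreal ((c * R) ^ m)"
    using assms by (intro emeasure_PiM_scaled_lborel_interval) auto
  finally show ?thesis .
qed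

lemma Zint_crowding_less:
  assumes "0 \<le> c" "0 < R" "m < k"
  shows "Zint (scale_measure (ennreal c) lborel) (crowding_potential R k) {0..<R} m =
    ennreal ((c * R) ^ m)"
proof (rule antisym)
  have "\<And>x. x \<in> PiE {..<m} (\<lambda>_. {0..<R}) \<Longrightarrow> hamiltonian (crowding_potential R k) m x = 0"
    using pure_k_body_crowding assms(3) by (rule hamiltonian_pure_k_body_less) auto
  then have "emeasure (PiM {..<m} (\<lambda>_. scale_measure (ennreal c) lborel)) (PiE {..<m} (\<lambda>_. {0..<R})) \<le>
      Zint (scale_measure (ennreal c) lborel) (crowding_potential R k) {0..<R} m"
    by (intro emeasure_le_Zint sets_PiM_I_finite) auto
  then show "ennreal ((c * R) ^ m) \<le>
      Zint (scale_measure (ennreal c) lborel) (crowding_potential R k) {0..<R} m"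
    using assms by (simp add: emeasure_PiM_scaled_lborel_interval)
qed (rule Zint_crowding_le[OF assms(1,2)])

lemma Zint_crowding_eq_0:
  assumes "0 < R" "2 \<le> k" "k \<le> m" "num_cells k < m"
  shows "Zint nu (crowding_potential R k) {0..<R} m = 0"
  using hamiltonian_crowding_eq_infinity[OF assms] by (rule Zint_eq_0)

lemma Zint_crowding_cell_intervals:
  assumes "0 \<le> c" "0 < R" "odd k"
  shows "ennreal ((c * R / k) ^ k) \<le>
    Zint (scale_measure (ennreal c) lborel) (crowding_potential R k) {0..<R} k"
proof -
  let ?nu = "scale_measure (ennreal c) lborel"
  have "0 < k"
    using odd_pos[OF assms(3)] .
  have "ennreal ((c * R / k) ^ k) = (\<Prod>i<k. ennreal c * emeasure lborel (cell_interval R k i))"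
    using assms(1,2) \<open>0 < k\<close>
    by (simp add: emeasure_cell_interval ennreal_mult[symmetric] ennreal_power[symmetric])
  also have "\<dots> = emeasure (PiM {..<k} (\<lambda>_. ?nu)) (PiE {..<k} (cell_interval R k))"
    by (rule emeasure_PiM_scale_measure_PiE[symmetric]) (auto simp: sigma_finite_lborel cell_interval_def)
  also have "\<dots> \<le> Zint ?nu (crowding_potential R k) {0..<R} k"
  proof (rule emeasure_le_Zint)
    show "PiE {..<k} (cell_interval R k) \<in> sets (PiM {..<k} (\<lambda>_. ?nu))"
      by (intro sets_PiM_I_finite) (auto simp: cell_interval_def)
    show "PiE {..<k} (cell_interval R k) \<subseteq> PiE {..<k} (\<lambda>_. {0..<R})"
      using cell_interval_subset[OF assms(2)] by (intro PiE_mono) simp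
  qed (rule hamiltonian_crowding_cell_intervals[OF assms(2,3)])
  finally show ?thesis .
qed

lemma crowding_partition_function:
  assumes "0 \<le> c" "0 < R" "2 \<le> k"
  shows "partition_function_eq (scale_measure (ennreal c) lborel) (crowding_potential R k) {0..<R} lam
    ((\<Sum>m<k. (lam * (c * R)) ^ m / fact m) +
      lam ^ k / fact k * enn2real (Zint (scale_measure (ennreal c) lborel) (crowding_potential R k) {0..<R} k))"
proof -
  let ?Z = "Zint (scale_measure (ennreal c) lborel) (crowding_potential R k) {0..<R}"
  have finite: "?Z m < \<infinity>" for m
    using Zint_crowding_le[OF assms(1,2), of k m] by (simp add: le_less_trans)
  have vanish: "?Z m = 0" if "k < m" for m
    using assms that by (intro Zint_crowding_eq_0) (auto simp: num_cells_def)
  have "lam ^ m / fact m * enn2real (?Z m) = (lam * (c * R)) ^ m / fact m" if "m < k" for m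
    using Zint_crowding_less[OF assms(1,2) that] assms(1,2) by (simp add: power_mult_distrib)
  then have "(\<Sum>m\<le>k. lam ^ m / fact m * enn2real (?Z m)) =
      (\<Sum>m<k. (lam * (c * R)) ^ m / fact m) + lam ^ k / fact k * enn2real (?Z k)"
    by (simp add: lessThan_Suc_atMost[symmetric])
  then show ?thesis
    using partition_function_eq_polynomial[OF finite vanish, of k lam] by simp
qed

text \<open>With fugacity \<open>-t/(c R)\<close> the partition function is \<open>scaled_exp_taylor (k - 1) 1 t\<close>
  for even \<open>k\<close> (where \<open>Z\<^sub>k = 0\<close>) and \<open>scaled_exp_taylor k (Z\<^sub>k / (c R)\<^sup>k) t\<close> for odd
  \<open>k\<close>, where \<open>Z\<^sub>k / (c R)\<^sup>k \<ge> k\<^sup>-\<^sup>k\<close>.\<close>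

lemma crowding_partition_function_scaled_exp_taylor:
  assumes "0 < c" "0 < R" "2 \<le> k"
  obtains j w where "odd j" "j \<le> k" "1 / real k ^ k \<le> w"
    and "\<And>t. partition_function_eq (scale_measure (ennreal c) lborel) (crowding_potential R k) {0..<R}
      (- (t / (c * R))) (scaled_exp_taylor j w t)"
proof -
  let ?nu = "scale_measure (ennreal c) lborel" and ?phi = "crowding_potential R k"
  define z where "z = enn2real (Zint ?nu ?phi {0..<R} k)"
  have "0 < c * R"
    using assms by simp
  have series: "partition_function_eq ?nu ?phi {0..<R} (- (t / (c * R)))
      ((\<Sum>m<k. (-t) ^ m / fact m) + (- (t / (c * R))) ^ k / fact k * z)" for t
  proof -
    have "- (t / (c * R)) * (c * R) = -t"
      using assms(1,2) by simp
    then show ?thesis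
      using crowding_partition_function[of c R k "- (t / (c * R))"] assms by (simp add: z_def)
  qed
  show ?thesis
  proof (cases "even k")
    case True
    then have "z = 0"
      using assms by (simp add: z_def Zint_crowding_eq_0 num_cells_def)
    moreover have "(\<Sum>m<k. (-t) ^ m / fact m) = scaled_exp_taylor (k - 1) 1 t" for t
      using assms(3) sum.lessThan_Suc[of "\<lambda>m. (-t) ^ m / fact m" "k - 1"]
      by (simp add: scaled_exp_taylor_def)
    ultimately show ?thesis
      using that[of "k - 1" 1] series True assms(3) by simp
  next
    case False
    have "ennreal ((c * R / k) ^ k) \<le> Zint ?nu ?phi {0..<R} k"
      using Zint_crowding_cell_intervals[of c R k] assms False by simp
    moreover have "Zint ?nu ?phi {0..<R} k < top"
      using Zint_crowding_le[of c R k k] assms by (metis ennreal_less_top le_less_trans less_imp_le)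
    ultimately have "(c * R / k) ^ k \<le> z"
      using enn2real_mono \<open>0 < c * R\<close> by (fastforce simp: z_def)
    have "1 / real k ^ k = (c * R / k) ^ k / (c * R) ^ k"
      using assms(1,2) by (simp add: power_divide)
    also have "\<dots> \<le> z / (c * R) ^ k"
      using \<open>(c * R / k) ^ k \<le> z\<close> \<open>0 < c * R\<close> by (intro divide_right_mono) auto
    finally have "1 / real k ^ k \<le> z / (c * R) ^ k" .
    moreover have "(- (t / (c * R))) ^ k / fact k * z = z / (c * R) ^ k * (-t) ^ k / fact k" for t
    proof -
      have "(- (t / (c * R))) ^ k = (-t) ^ k / (c * R) ^ k"
        by (simp add: power_divide[symmetric])
      then show ?thesis
        by (simp add: divide_inverse mult_ac)
    qed
    ultimately show ?thesis
      using that[of k "z / (c * R) ^ k"] series False by (simp add: scaled_exp_taylor_def)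
  qed
qed

lemma crowding_partition_function_root:
  assumes "0 < c" "0 < R" "2 \<le> k"
  shows "\<exists>lam>0. lam \<le> (real k * fact k * real k ^ k + 1) / R / c \<and>
    partition_function_eq (scale_measure (ennreal c) lborel) (crowding_potential R k) {0..<R} (-lam) 0"
proof -
  obtain j w where "odd j" "j \<le> k" "1 / real k ^ k \<le> w"
    and Z: "\<And>t. partition_function_eq (scale_measure (ennreal c) lborel) (crowding_potential R k) {0..<R}
      (- (t / (c * R))) (scaled_exp_taylor j w t)"
    using crowding_partition_function_scaled_exp_taylor[OF assms] by blast
  obtain t where t: "0 < t" "t \<le> real j * fact j / (1 / real k ^ k) + 1" "scaled_exp_taylor j w t = 0"
    using scaled_exp_taylor_root[OF \<open>odd j\<close> _ \<open>1 / real k ^ k \<le> w\<close>] assms(3) by auto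
  have "real j * fact j \<le> real k * fact k"
    using \<open>j \<le> k\<close> by (intro mult_mono) (auto simp: fact_mono)
  then have "real j * fact j * real k ^ k \<le> real k * fact k * real k ^ k"
    by (rule mult_right_mono) simp
  then have "t \<le> real k * fact k * real k ^ k + 1"
    using t(2) by simp
  then have "t / (c * R) \<le> (real k * fact k * real k ^ k + 1) / R / c"
    using assms(1,2) unfolding divide_divide_eq_left mult.commute[of R c] by (intro divide_right_mono) auto
  moreover have "0 < t / (c * R)"
    using t(1) assms(1,2) by simp
  ultimately show ?thesis
    using Z[of t] t(3) by (intro exI[of _ "t / (c * R)"]) auto
qed

lemma crowding_model_admissible:
  "cs_mm_space UNIV dist (scale_measure (ennreal c) (lborel :: real measure)) \<and>
   assumption_A UNIV dist (scale_measure (ennreal c) (lborel :: real measure)) \<and>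
   potential_measurable (scale_measure (ennreal c) (lborel :: real measure)) (crowding_potential R k) \<and>
   potential_symmetric UNIV (crowding_potential R k) \<and> potential_repulsive UNIV (crowding_potential R k) \<and>
   pure_k_body UNIV k (crowding_potential R k) \<and> potential_range UNIV dist R (crowding_potential R k) \<and>
   {0..<R} \<in> sets (scale_measure (ennreal c) (lborel :: real measure))"
  by (intro conjI cs_mm_space_scaled_lborel assumption_A_scaled_lborel potential_measurable_crowding
      potential_symmetric_crowding potential_repulsive_crowding pure_k_body_crowding
      potential_range_crowding) simp_all

theorem mainTheorem10:
  fixes R :: real and k :: nat
  assumes "R > 0" and "k \<ge> 2"
  shows "\<exists>(X :: nat \<Rightarrow> real set) (d :: nat \<Rightarrow> real \<Rightarrow> real \<Rightarrow> real) (nu :: nat \<Rightarrow> real measure)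
            (phi :: nat \<Rightarrow> real potential) (L :: nat \<Rightarrow> real set) (lam :: nat \<Rightarrow> real).
     (\<forall>n. cs_mm_space (X n) (d n) (nu n) \<and> assumption_A (X n) (d n) (nu n) \<and>
          potential_measurable (nu n) (phi n) \<and> potential_symmetric (X n) (phi n) \<and>
          potential_repulsive (X n) (phi n) \<and> pure_k_body (X n) k (phi n) \<and>
          potential_range (X n) (d n) R (phi n) \<and>
          L n \<subseteq> X n \<and> Metric_space.mbounded (X n) (d n) (L n) \<and> L n \<in> sets (nu n) \<and>
          lam n > 0 \<and>
          partition_function_eq (nu n) (phi n) (L n) (- lam n) 0) \<and>
     (\<forall>\<^sub>F n in sequentially. ball_volume_sup (X n) (d n) (nu n) R < \<infinity>) \<and>
     filterlim (\<lambda>n. enn2real (ball_volume_sup (X n) (d n) (nu n) R)) at_top sequentially \<and>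
     lam \<in> O(\<lambda>n. ln (enn2real (ball_volume_sup (X n) (d n) (nu n) R))
                 / enn2real (ball_volume_sup (X n) (d n) (nu n) R))"
proof -
  define nu where "nu n = scale_measure (ennreal (Suc n)) (lborel :: real measure)" for n
  define T where "T = (real k * fact k * real k ^ k + 1) / R"
  have "\<exists>l>0. l \<le> T / real (Suc n) \<and>
      partition_function_eq (nu n) (crowding_potential R k) {0..<R} (-l) 0" for n
    unfolding nu_def T_def using assms by (intro crowding_partition_function_root) simp_all
  then obtain lam where lam: "\<And>n. 0 < lam n" "\<And>n. lam n \<le> T / real (Suc n)"
      "\<And>n. partition_function_eq (nu n) (crowding_potential R k) {0..<R} (- lam n) 0"
    by metis
  have ball: "ball_volume_sup UNIV dist (nu n) R = ennreal (2 * real (Suc n) * R)" for n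
    unfolding nu_def using assms(1) by (intro ball_volume_sup_scaled_lborel) auto
  have "lam \<in> O(\<lambda>n. 1 / real (Suc n))"
    using lam(2) by (intro bigoI[of _ T] always_eventually) (simp add: abs_of_pos[OF lam(1)])
  also have "(\<lambda>n. 1 / real (Suc n)) \<in> O(\<lambda>n. ln (2 * real (Suc n) * R) / (2 * real (Suc n) * R))"
    using assms(1) by real_asymp
  finally have "lam \<in> O(\<lambda>n. ln (2 * real (Suc n) * R) / (2 * real (Suc n) * R))" .
  moreover have "filterlim (\<lambda>n. 2 * real (Suc n) * R) at_top sequentially"
    using assms(1) by real_asymp
  ultimately show ?thesis
    using lam(1,3) ball assms(1) crowding_model_admissible[of "real (Suc _)" R k, folded nu_def]
    by (intro exI[of _ "\<lambda>_. UNIV"] exI[of _ "\<lambda>_. dist"] exI[of _ nu] exI[of _ "\<lambda>_. crowding_potential R k"]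
        exI[of _ "\<lambda>_. {0..<R}"] exI[of _ lam]) simp
qed

end
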